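(* Let $n \ge 2$ be an integer and let $p_0 = \frac{n\log n - (n-1)\log(n-1)}{\log n}$. Then for every $1 \le p \le p_0$ we have $U(n,p) = 1$; that is, the maximum of the permanent over $n\times n$ matrices whose rows are unit vectors in $\ell_p^n$ equals $1$, the value attained by the identity matrix.
   Context: For $n\ge 1$ and $1 \le p \le \infty$, $U(n,p)$ denotes the maximum of $\mathrm{per}(A)=\sum_{\sigma\in S_n}\prod_{i=1}^n a_{i\sigma(i)}$ over all real $n\times n$ matrices $A$ each of whose rows has $\ell_p$-norm equal to $1$. *)

theory Defs
  imports "HOL-Analysis.Analysis" "HOL-Combinatorics.Permutations"
begin

text \<open>n x n real matrices are represented as functions nat => nat => real,
  only entries with indices below n matter.\<close>

definition per :: "nat \<Rightarrow> (nat \<Rightarrow> nat \<Rightarrow> real) \<Rightarrow> real" where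
  "per n A = (\<Sum>\<sigma> | \<sigma> permutes {..<n}. \<Prod>i<n. A i (\<sigma> i))"

definition row_lp_norm :: "nat \<Rightarrow> real \<Rightarrow> (nat \<Rightarrow> nat \<Rightarrow> real) \<Rightarrow> nat \<Rightarrow> real" where
  "row_lp_norm n p A i = (\<Sum>j<n. \<bar>A i j\<bar> powr p) powr (1 / p)"

definition U :: "nat \<Rightarrow> real \<Rightarrow> real" where
  "U n p = Sup {per n A | A. \<forall>i<n. row_lp_norm n p A i = 1}"

end

theory Submission
  imports Defs "HOL-Real_Asymp.Real_Asymp"
begin

(* U n p >= 1 is witnessed by the identity matrix. For the upper bound write |a_ij| = x_ij^(1/p),
   where each row x_i is a probability vector. Expanding the permanent along a column, an
   induction on the size reduces the claim to
     sum_i (y_i * prod_{k ~= i} (1 - y_k))^(1/p) <= 1   for y in [0,1]^m, m <= n.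
   With weights pi_i proportional to the summands, the logarithm of the left side is a cross
   entropy minus an entropy; Gibbs' inequality bounds the cross entropy, leaving
   -(1/p) * sum_i Psi (p - 1) (pi_i), where Psi c t = c t ln t - (1 - t) ln (1 - t).
   So it suffices that sum_i Psi c (pi_i) >= 0 on the simplex of dimension n for c <= p0 - 1.
   Psi c is convex below c / (1 + c) and concave above it, so spreading mass on the concave
   part and averaging on the convex part reach a point (t, s, ..., s) without increasing the
   sum. Along this curve the sum is 0 at t = 1 and, precisely for c = p0 - 1, at t = 1/n, and
   it increases and then decreases in between. *)

section \<open>Calculus on closed intervals\<close>

lemma MVT_interior:
  fixes f f' :: "real \<Rightarrow> real"
  assumes "a < b" "continuous_on {a..b} f"
    and "\<And>x. a < x \<Longrightarrow> x < b \<Longrightarrow> (f has_real_derivative f' x) (at x)"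
  shows "\<exists>\<xi>. a < \<xi> \<and> \<xi> < b \<and> f b - f a = (b - a) * f' \<xi>"
proof -
  obtain l \<xi> where \<xi>: "a < \<xi>" "\<xi> < b" "DERIV f \<xi> :> l" "f b - f a = (b - a) * l"
    using MVT[OF assms(1,2)] assms(3) real_differentiable_def by meson
  moreover have "l = f' \<xi>"
    using \<xi> assms(3) DERIV_unique by blast
  ultimately show ?thesis by blast
qed

lemma convex_on_Icc_if_deriv_mono:
  fixes f f' :: "real \<Rightarrow> real"
  assumes cont: "continuous_on {a..b} f"
    and deriv: "\<And>x. a < x \<Longrightarrow> x < b \<Longrightarrow> (f has_real_derivative f' x) (at x)"
    and mono: "\<And>x y. a < x \<Longrightarrow> x \<le> y \<Longrightarrow> y < b \<Longrightarrow> f' x \<le> f' y"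
  shows "convex_on {a..b} f"
proof (rule convex_on_linorderI)
  fix t x y :: real
  assume t: "0 < t" "t < 1" and xy: "x \<in> {a..b}" "y \<in> {a..b}" "x < y"
  define z where "z = (1 - t) * x + t * y"
  have zx: "z - x = t * (y - x)" and yz: "y - z = (1 - t) * (y - x)"
    by (simp_all add: z_def algebra_simps)
  have "x < z" "z < y"
    using zx yz t xy by (metis diff_gt_0_iff_gt mult_pos_pos)+
  have "\<exists>\<xi>. x < \<xi> \<and> \<xi> < z \<and> f z - f x = (z - x) * f' \<xi>"
    using \<open>x < z\<close> \<open>z < y\<close> xy
    by (intro MVT_interior continuous_on_subset[OF cont] deriv) auto
  then obtain \<xi> where \<xi>: "x < \<xi>" "\<xi> < z" "f z - f x = (z - x) * f' \<xi>" by blast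
  have "\<exists>\<eta>. z < \<eta> \<and> \<eta> < y \<and> f y - f z = (y - z) * f' \<eta>"
    using \<open>x < z\<close> \<open>z < y\<close> xy
    by (intro MVT_interior continuous_on_subset[OF cont] deriv) auto
  then obtain \<eta> where \<eta>: "z < \<eta>" "\<eta> < y" "f y - f z = (y - z) * f' \<eta>" by blast
  have "t * (1 - t) * (y - x) * f' \<xi> \<le> t * (1 - t) * (y - x) * f' \<eta>"
    using mono[of \<xi> \<eta>] \<xi> \<eta> xy t by (intro mult_left_mono) auto
  then have "(1 - t) * (f z - f x) \<le> t * (f y - f z)"
    unfolding \<xi>(3) \<eta>(3) zx yz by (simp add: algebra_simps)
  moreover have "(1 - t) *\<^sub>R x + t *\<^sub>R y = z" by (simp add: z_def)
  ultimately show "f ((1 - t) *\<^sub>R x + t *\<^sub>R y) \<le> (1 - t) * f x + t * f y"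
    by (simp add: algebra_simps)
qed simp

lemma convex_on_Icc_if_second_deriv_nonneg:
  fixes f f' f'' :: "real \<Rightarrow> real"
  assumes "continuous_on {a..b} f"
    and "\<And>x. a < x \<Longrightarrow> x < b \<Longrightarrow> (f has_real_derivative f' x) (at x)"
    and "\<And>x. a < x \<Longrightarrow> x < b \<Longrightarrow> (f' has_real_derivative f'' x) (at x)"
    and "\<And>x. a < x \<Longrightarrow> x < b \<Longrightarrow> 0 \<le> f'' x"
  shows "convex_on {a..b} f"
proof (rule convex_on_Icc_if_deriv_mono[OF assms(1,2)])
  fix x y assume "a < x" "x \<le> y" "y < b"
  then show "f' x \<le> f' y"
    using assms(3,4) by (intro DERIV_nonneg_imp_nondecreasing[OF \<open>x \<le> y\<close>]) force
qed

lemma concave_on_Icc_if_second_deriv_nonpos: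
  fixes f f' f'' :: "real \<Rightarrow> real"
  assumes "continuous_on {a..b} f"
    and "\<And>x. a < x \<Longrightarrow> x < b \<Longrightarrow> (f has_real_derivative f' x) (at x)"
    and "\<And>x. a < x \<Longrightarrow> x < b \<Longrightarrow> (f' has_real_derivative f'' x) (at x)"
    and "\<And>x. a < x \<Longrightarrow> x < b \<Longrightarrow> f'' x \<le> 0"
  shows "concave_on {a..b} f"
  unfolding concave_on_def
  using assms
  by (intro convex_on_Icc_if_second_deriv_nonneg[where f' = "\<lambda>x. - f' x" and f'' = "\<lambda>x. - f'' x"])
    (auto intro: continuous_intros derivative_intros)

lemma min_le_if_deriv_stays_nonpos:
  fixes f f' :: "real \<Rightarrow> real"
  assumes "a \<le> t" "t \<le> b" and cont: "continuous_on {a..b} f"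
    and deriv: "\<And>x. a < x \<Longrightarrow> x < b \<Longrightarrow> (f has_real_derivative f' x) (at x)"
    and stays: "\<And>u v. a < u \<Longrightarrow> u \<le> v \<Longrightarrow> v < b \<Longrightarrow> f' u < 0 \<Longrightarrow> f' v \<le> 0"
  shows "min (f a) (f b) \<le> f t"
proof (cases "\<exists>u. a < u \<and> u < t \<and> f' u < 0")
  case True
  then obtain u where u: "a < u" "u < t" "f' u < 0" by blast
  have "f b \<le> f t"
  proof (rule DERIV_nonpos_imp_decreasing_open[OF \<open>t \<le> b\<close>])
    show "continuous_on {t..b} f" by (rule continuous_on_subset[OF cont]) (use \<open>a \<le> t\<close> in auto)
    show "\<exists>y. DERIV f x :> y \<and> y \<le> 0" if "t < x" "x < b" for x
      using that u \<open>a \<le> t\<close> by (intro exI[of _ "f' x"]) (auto intro: deriv stays)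
  qed
  then show ?thesis by simp
next
  case False
  have "f a \<le> f t"
  proof (rule DERIV_nonneg_imp_increasing_open[OF \<open>a \<le> t\<close>])
    show "continuous_on {a..t} f" by (rule continuous_on_subset[OF cont]) (use \<open>t \<le> b\<close> in auto)
    show "\<exists>y. DERIV f x :> y \<and> 0 \<le> y" if "a < x" "x < t" for x
      using that False \<open>t \<le> b\<close> by (intro exI[of _ "f' x"]) (auto intro: deriv)
  qed
  then show ?thesis by simp
qed

section \<open>The function Psi\<close>

lemma continuous_on_x_ln_x: "continuous_on {0..} (\<lambda>x::real. x * ln x)"
proof -
  have "continuous (at x within {0..}) (\<lambda>x::real. x * ln x)" if "0 \<le> x" for x
  proof (cases "x = 0")
    case True
    have "((\<lambda>x::real. x * ln x) \<longlongrightarrow> 0) (at_right 0)" by real_asymp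
    then show ?thesis
      using True by (simp add: continuous_within at_within_Ici_at_right)
  next
    case False
    with that have "continuous (at x) (\<lambda>x::real. x * ln x)"
      by (intro continuous_intros) auto
    then show ?thesis by (rule continuous_at_imp_continuous_at_within)
  qed
  then show ?thesis by (simp add: continuous_on_eq_continuous_within)
qed

(* Since ln 0 = 0, this agrees with the convention 0 ln 0 = 0 at both endpoints. *)
definition Psi :: "real \<Rightarrow> real \<Rightarrow> real" where
  "Psi c t = c * (t * ln t) - (1 - t) * ln (1 - t)"

definition Psi' :: "real \<Rightarrow> real \<Rightarrow> real" where
  "Psi' c t = c * (ln t + 1) + ln (1 - t) + 1"

lemma Psi_0 [simp]: "Psi c 0 = 0" and Psi_1 [simp]: "Psi c 1 = 0"
  by (simp_all add: Psi_def)

lemma has_real_derivative_Psi: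
  "0 < t \<Longrightarrow> t < 1 \<Longrightarrow> (Psi c has_real_derivative Psi' c t) (at t)"
  unfolding Psi_def[abs_def] Psi'_def
  by (auto intro!: derivative_eq_intros simp: field_simps)

lemma has_real_derivative_Psi':
  "0 < t \<Longrightarrow> t < 1 \<Longrightarrow> (Psi' c has_real_derivative c / t - 1 / (1 - t)) (at t)"
  unfolding Psi'_def[abs_def]
  by (auto intro!: derivative_eq_intros simp: field_simps)

lemma continuous_on_Psi: "continuous_on {0..1} (Psi c)"
proof -
  have "continuous_on {0..1} (\<lambda>t::real. t * ln t)"
    by (rule continuous_on_subset[OF continuous_on_x_ln_x]) auto
  moreover have "continuous_on {0..1} ((\<lambda>t::real. t * ln t) \<circ> (\<lambda>t. 1 - t))"
    by (intro continuous_on_compose continuous_intros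
        continuous_on_subset[OF continuous_on_x_ln_x]) auto
  ultimately show ?thesis
    unfolding Psi_def[abs_def] o_def
    by (intro continuous_on_diff[OF continuous_on_mult[OF continuous_on_const]])
qed

lemma convex_on_Psi:
  assumes "0 \<le> c"
  shows "convex_on {0..c / (1 + c)} (Psi c)"
proof (rule convex_on_Icc_if_second_deriv_nonneg)
  show "continuous_on {0..c / (1 + c)} (Psi c)"
    using assms by (intro continuous_on_subset[OF continuous_on_Psi]) auto
  fix t assume t: "0 < t" "t < c / (1 + c)"
  moreover have "c / (1 + c) < 1" using assms by simp
  ultimately have "t < 1" by linarith
  with t show "(Psi c has_real_derivative Psi' c t) (at t)"
    and "(Psi' c has_real_derivative c / t - 1 / (1 - t)) (at t)"
    by (simp_all add: has_real_derivative_Psi has_real_derivative_Psi')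
  show "0 \<le> c / t - 1 / (1 - t)"
    using t \<open>t < 1\<close> assms by (simp add: field_simps)
qed

lemma concave_on_Psi:
  assumes "0 \<le> c"
  shows "concave_on {c / (1 + c)..1} (Psi c)"
proof (rule concave_on_Icc_if_second_deriv_nonpos)
  show "continuous_on {c / (1 + c)..1} (Psi c)"
    using assms by (intro continuous_on_subset[OF continuous_on_Psi]) auto
  fix t assume t: "c / (1 + c) < t" "t < 1"
  then have "0 < t" using assms by (smt (verit) divide_nonneg_nonneg)
  with t show "(Psi c has_real_derivative Psi' c t) (at t)"
    and "(Psi' c has_real_derivative c / t - 1 / (1 - t)) (at t)"
    by (simp_all add: has_real_derivative_Psi has_real_derivative_Psi')
  show "c / t - 1 / (1 - t) \<le> 0"
    using t \<open>0 < t\<close> assms by (simp add: field_simps)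
qed

section \<open>Minimising sums over the simplex\<close>

lemma concave_on_spread_pair:
  fixes f :: "real \<Rightarrow> real"
  assumes conc: "concave_on {l..u} f" and "l \<le> a" "l \<le> b" "a + b - l \<le> u"
  shows "f l + f (a + b - l) \<le> f a + f b"
proof (cases "a + b - l = l")
  case True
  with assms have "a = l" "b = l" by linarith+
  then show ?thesis by simp
next
  case False
  define s where "s = a + b - l"
  define t where "t = (a - l) / (s - l)"
  have "l < s" using False assms by (simp add: s_def)
  then have t: "0 \<le> t" "t \<le> 1" using assms by (simp_all add: t_def s_def field_simps)
  have mem: "l \<in> {l..u}" "s \<in> {l..u}" using \<open>l < s\<close> assms by (auto simp: s_def)
  have "t * (s - l) = a - l" using \<open>l < s\<close> by (simp add: t_def)
  then have "(1 - t) *\<^sub>R l + t *\<^sub>R s = a" "(1 - (1 - t)) *\<^sub>R l + (1 - t) *\<^sub>R s = b"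
    by (simp_all add: s_def algebra_simps)
  then have "(1 - t) * f l + t * f s \<le> f a" "t * f l + (1 - t) * f s \<le> f b"
    using concave_onD[OF conc t mem] concave_onD[OF conc _ _ mem, of "1 - t"] t by auto
  then show ?thesis by (simp add: s_def[symmetric] algebra_simps)
qed

lemma sum_concave_spread_step:
  fixes f :: "real \<Rightarrow> real" and \<pi> :: "'a \<Rightarrow> real"
  assumes conc: "concave_on {\<tau>..1} f" and "0 \<le> \<tau>" and fin: "finite I"
    and nonneg: "\<forall>i\<in>I. 0 \<le> \<pi> i" and sum1: "sum \<pi> I = 1"
    and ab: "a \<in> I" "b \<in> I" "a \<noteq> b" "\<tau> < \<pi> a" "\<tau> < \<pi> b"
  defines "\<pi>' \<equiv> \<pi>(a := \<tau>, b := \<pi> a + \<pi> b - \<tau>)"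
  shows "\<forall>i\<in>I. 0 \<le> \<pi>' i" and "sum \<pi>' I = 1"
    and "card {i\<in>I. \<tau> < \<pi>' i} < card {i\<in>I. \<tau> < \<pi> i}"
    and "(\<Sum>i\<in>I. f (\<pi>' i)) \<le> (\<Sum>i\<in>I. f (\<pi> i))"
proof -
  have split: "sum g I = g a + g b + sum g (I - {a, b})" for g :: "'a \<Rightarrow> real"
    using sum.subset_diff[of "{a, b}" I g] fin ab by (simp add: add.commute)
  have rest: "sum g (I - {a, b}) = sum h (I - {a, b})" if "\<And>i. i \<notin> {a, b} \<Longrightarrow> g i = h i"
    for g h :: "'a \<Rightarrow> real"
    using that by (intro sum.cong) auto
  have "\<pi> a + \<pi> b + sum \<pi> (I - {a, b}) = 1" using split[of \<pi>] sum1 by simp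
  moreover have "0 \<le> sum \<pi> (I - {a, b})" using nonneg by (intro sum_nonneg) auto
  ultimately have "\<pi> a + \<pi> b - \<tau> \<le> 1" using \<open>0 \<le> \<tau>\<close> by linarith
  show "\<forall>i\<in>I. 0 \<le> \<pi>' i" using nonneg ab \<open>0 \<le> \<tau>\<close> by (simp add: \<pi>'_def)
  show "sum \<pi>' I = 1"
    using split[of \<pi>'] split[of \<pi>] rest[of \<pi>' \<pi>] sum1 ab(3) by (simp add: \<pi>'_def)
  have "{i\<in>I. \<tau> < \<pi>' i} \<subset> {i\<in>I. \<tau> < \<pi> i}"
    using ab by (auto simp: \<pi>'_def)
  then show "card {i\<in>I. \<tau> < \<pi>' i} < card {i\<in>I. \<tau> < \<pi> i}"
    using fin by (intro psubset_card_mono) auto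
  have "f \<tau> + f (\<pi> a + \<pi> b - \<tau>) \<le> f (\<pi> a) + f (\<pi> b)"
    using ab \<open>\<pi> a + \<pi> b - \<tau> \<le> 1\<close> by (intro concave_on_spread_pair[OF conc]) auto
  then show "(\<Sum>i\<in>I. f (\<pi>' i)) \<le> (\<Sum>i\<in>I. f (\<pi> i))"
    using split[of "\<lambda>i. f (\<pi>' i)"] split[of "\<lambda>i. f (\<pi> i)"]
      rest[of "\<lambda>i. f (\<pi>' i)" "\<lambda>i. f (\<pi> i)"] ab(3)
    by (simp add: \<pi>'_def)
qed

lemma sum_concave_reduce_to_one_above:
  fixes f :: "real \<Rightarrow> real" and \<pi> :: "'a \<Rightarrow> real"
  assumes conc: "concave_on {\<tau>..1} f" and "0 \<le> \<tau>" and fin: "finite I" and "I \<noteq> {}"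
  shows "\<forall>i\<in>I. 0 \<le> \<pi> i \<Longrightarrow> sum \<pi> I = 1 \<Longrightarrow>
    \<exists>\<pi>'. (\<forall>i\<in>I. 0 \<le> \<pi>' i) \<and> sum \<pi>' I = 1 \<and> (\<exists>i0\<in>I. \<forall>j\<in>I - {i0}. \<pi>' j \<le> \<tau>) \<and>
      (\<Sum>i\<in>I. f (\<pi>' i)) \<le> (\<Sum>i\<in>I. f (\<pi> i))"
proof (induction "card {i\<in>I. \<tau> < \<pi> i}" arbitrary: \<pi> rule: less_induct)
  case less
  show ?case
  proof (cases "\<exists>a\<in>I. \<exists>b\<in>I. a \<noteq> b \<and> \<tau> < \<pi> a \<and> \<tau> < \<pi> b")
    case False
    obtain i0 where "i0 \<in> I" "\<forall>j\<in>I. \<tau> < \<pi> j \<longrightarrow> j = i0"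
    proof (cases "\<exists>i\<in>I. \<tau> < \<pi> i")
      case True
      then show ?thesis using False that by blast
    next
      case False
      then show ?thesis using \<open>I \<noteq> {}\<close> that by blast
    qed
    then have "\<forall>j\<in>I - {i0}. \<pi> j \<le> \<tau>" by force
    then show ?thesis using less.prems \<open>i0 \<in> I\<close> by blast
  next
    case True
    then obtain a b where ab: "a \<in> I" "b \<in> I" "a \<noteq> b" "\<tau> < \<pi> a" "\<tau> < \<pi> b" by blast
    note step = sum_concave_spread_step[OF conc \<open>0 \<le> \<tau>\<close> fin less.prems ab]
    show ?thesis
      using less.hyps[OF step(3,1,2)] step(4) by (meson order_trans)
  qed
qed

lemma convex_on_mean_padded_le_sum:
  fixes f :: "real \<Rightarrow> real" and \<pi> :: "'a \<Rightarrow> real"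
  assumes conv: "convex_on {0..\<tau>} f" and "f 0 \<le> 0"
    and fin: "finite J" and "card J \<le> m" "1 \<le> m" and range: "\<forall>j\<in>J. \<pi> j \<in> {0..\<tau>}"
  shows "real m * f (sum \<pi> J / real m) \<le> (\<Sum>j\<in>J. f (\<pi> j))"
proof (cases "J = {}")
  case True
  then show ?thesis using \<open>f 0 \<le> 0\<close> by (simp add: mult_nonneg_nonpos)
next
  case False
  define k where "k = card J"
  define S where "S = sum \<pi> J"
  have "1 \<le> k" using False fin by (simp add: k_def Suc_le_eq card_gt_0_iff)
  have "0 \<le> S" "S \<le> real k * \<tau>"
    using range by (auto simp: S_def k_def intro: sum_nonneg sum_bounded_above)
  then have mean: "S / real k \<in> {0..\<tau>}" using \<open>1 \<le> k\<close> by (auto simp: field_simps)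
  have "f (\<Sum>j\<in>J. (1 / real k) *\<^sub>R \<pi> j) \<le> (\<Sum>j\<in>J. (1 / real k) * f (\<pi> j))"
    using range \<open>1 \<le> k\<close> by (intro convex_on_sum[OF fin False conv]) (auto simp: k_def)
  then have jensen: "real k * f (S / real k) \<le> (\<Sum>j\<in>J. f (\<pi> j))"
    using \<open>1 \<le> k\<close>
    by (simp add: S_def sum_divide_distrib[symmetric] sum_distrib_left[symmetric] field_simps)
  define t where "t = real k / real m"
  have t: "0 \<le> t" "t \<le> 1" using \<open>card J \<le> m\<close> \<open>1 \<le> m\<close> by (simp_all add: t_def k_def)
  have "f ((1 - t) *\<^sub>R 0 + t *\<^sub>R (S / real k)) \<le> (1 - t) * f 0 + t * f (S / real k)"
    using mean by (intro convex_onD[OF conv t]) auto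
  moreover have "(1 - t) * f 0 \<le> 0" using t \<open>f 0 \<le> 0\<close> by (simp add: mult_nonneg_nonpos)
  ultimately have "f (S / real m) \<le> t * f (S / real k)"
    using \<open>1 \<le> k\<close> \<open>1 \<le> m\<close> by (simp add: t_def)
  then have "real m * f (S / real m) \<le> real k * f (S / real k)"
    using \<open>1 \<le> m\<close> by (simp add: t_def mult_left_mono[of _ _ "real m", simplified] field_simps)
  with jensen show ?thesis by (simp add: S_def)
qed

section \<open>The flat profile\<close>

(* The sum of Psi c over the point (t, s, ..., s) of the N-simplex, s = (1 - t) / (N - 1). *)
definition Psi_flat :: "real \<Rightarrow> real \<Rightarrow> real \<Rightarrow> real" where
  "Psi_flat N c t = Psi c t + (N - 1) * Psi c ((1 - t) / (N - 1))"

definition Psi_flat' :: "real \<Rightarrow> real \<Rightarrow> real \<Rightarrow> real" where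
  "Psi_flat' N c t = Psi' c t - Psi' c ((1 - t) / (N - 1))"

(* Has the sign of the second derivative of Psi_flat on (0, 1). *)
definition flat_curvature :: "real \<Rightarrow> real \<Rightarrow> real \<Rightarrow> real" where
  "flat_curvature N c t = c * (N - 2) - t * (N - 1 - c)"

lemma flat_point_bounds:
  fixes N t :: real
  assumes "2 \<le> N" "0 < t" "t < 1"
  shows "0 < (1 - t) / (N - 1)" "(1 - t) / (N - 1) < 1"
  using assms by (auto simp: field_simps)

lemma has_real_derivative_Psi_flat:
  assumes N: "2 \<le> N" and t: "0 < t" "t < 1"
  shows "(Psi_flat N c has_real_derivative Psi_flat' N c t) (at t)"
proof -
  have "((\<lambda>t. (1 - t) / (N - 1)) has_real_derivative (0 - 1) / (N - 1)) (at t)"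
    by (intro DERIV_cdivide DERIV_diff DERIV_const DERIV_ident)
  from DERIV_chain2[OF has_real_derivative_Psi[OF flat_point_bounds[OF N t]] this]
  have "((\<lambda>t. Psi c t + (N - 1) * Psi c ((1 - t) / (N - 1))) has_real_derivative
      Psi' c t + (N - 1) * (Psi' c ((1 - t) / (N - 1)) * ((0 - 1) / (N - 1)))) (at t)"
    by (intro DERIV_add DERIV_cmult has_real_derivative_Psi t)
  then show ?thesis
    using N by (simp add: Psi_flat_def[abs_def] Psi_flat'_def)
qed

lemma has_real_derivative_Psi_flat':
  assumes N: "2 \<le> N" and t: "0 < t" "t < 1"
  shows "(Psi_flat' N c has_real_derivative
    flat_curvature N c t / (t * (1 - t) * (N - 2 + t))) (at t)"
proof -
  define s where "s = (1 - t) / (N - 1)"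
  have s: "0 < s" "s < 1" using flat_point_bounds[OF N t] by (simp_all add: s_def)
  have "((\<lambda>t. (1 - t) / (N - 1)) has_real_derivative (0 - 1) / (N - 1)) (at t)"
    by (intro DERIV_cdivide DERIV_diff DERIV_const DERIV_ident)
  from DERIV_chain2[OF has_real_derivative_Psi'[OF s[unfolded s_def]] this]
  have "((\<lambda>t. Psi' c t - Psi' c ((1 - t) / (N - 1))) has_real_derivative
      (c / t - 1 / (1 - t)) - (c / s - 1 / (1 - s)) * ((0 - 1) / (N - 1))) (at t)"
    unfolding s_def by (intro DERIV_diff has_real_derivative_Psi' t)
  moreover have "(c / t - 1 / (1 - t)) - (c / s - 1 / (1 - s)) * ((0 - 1) / (N - 1))
      = flat_curvature N c t / (t * (1 - t) * (N - 2 + t))"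
  proof -
    have "(N - 1) * s = 1 - t" "(N - 1) * (1 - s) = N - 2 + t"
      using N by (simp_all add: s_def field_simps)
    then have "c / s / (N - 1) = c / (1 - t)" "1 / (1 - s) / (N - 1) = 1 / (N - 2 + t)"
      by (simp_all add: divide_divide_eq_left mult.commute)
    moreover have "(c / s - 1 / (1 - s)) * ((0 - 1) / (N - 1))
        = 1 / (1 - s) / (N - 1) - c / s / (N - 1)"
      by (simp add: diff_divide_distrib algebra_simps)
    ultimately have "(c / s - 1 / (1 - s)) * ((0 - 1) / (N - 1)) = 1 / (N - 2 + t) - c / (1 - t)"
      by simp
    moreover have "c / t - 1 / (1 - t) - (1 / (N - 2 + t) - c / (1 - t))
        = flat_curvature N c t / (t * (1 - t) * (N - 2 + t))"
    proof -
      define d where "d = N - 2 + t"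
      have "d \<noteq> 0" "t \<noteq> 0" "1 - t \<noteq> 0" using N t by (simp_all add: d_def)
      then have "c / t - 1 / (1 - t) - (1 / d - c / (1 - t))
          = (c * (d - t) - t * (d + 1 - t - c)) / (t * (1 - t) * d)"
        by (simp add: divide_simps) (simp add: algebra_simps)
      moreover have "flat_curvature N c t = c * (d - t) - t * (d + 1 - t - c)"
        by (simp add: flat_curvature_def d_def algebra_simps)
      ultimately show ?thesis by (simp add: d_def)
    qed
    ultimately show ?thesis by simp
  qed
  ultimately show ?thesis by (simp add: Psi_flat'_def[abs_def])
qed

lemma continuous_on_Psi_flat:
  assumes "2 \<le> N"
  shows "continuous_on {0..1} (Psi_flat N c)"
proof -
  have "continuous_on {0..1} (Psi c \<circ> (\<lambda>t. (1 - t) / (N - 1)))"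
    using assms
    by (intro continuous_on_compose continuous_intros continuous_on_subset[OF continuous_on_Psi])
      (auto simp: field_simps)
  then show ?thesis
    unfolding Psi_flat_def[abs_def] o_def
    by (intro continuous_on_add continuous_on_mult[OF continuous_on_const] continuous_on_Psi)
qed

lemma Psi_flat_1 [simp]: "Psi_flat N c 1 = 0"
  by (simp add: Psi_flat_def)

lemma Psi_flat_inverse:
  assumes "2 \<le> N"
  shows "Psi_flat N c (1 / N) = N * Psi c (1 / N)" and "Psi_flat' N c (1 / N) = 0"
proof -
  have "(1 - 1 / N) / (N - 1) = 1 / N" using assms by (simp add: field_simps)
  then show "Psi_flat N c (1 / N) = N * Psi c (1 / N)" "Psi_flat' N c (1 / N) = 0"
    by (simp_all add: Psi_flat_def Psi_flat'_def algebra_simps)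
qed

lemma flat_curvature_nonneg_between:
  assumes "x \<le> u" "u \<le> y" "0 \<le> flat_curvature N c x" "0 \<le> flat_curvature N c y"
  shows "0 \<le> flat_curvature N c u"
proof (cases "0 \<le> N - 1 - c")
  case True
  then have "u * (N - 1 - c) \<le> y * (N - 1 - c)" using assms by (intro mult_right_mono)
  then show ?thesis using assms by (simp add: flat_curvature_def)
next
  case False
  then have "u * (N - 1 - c) \<le> x * (N - 1 - c)" using assms by (intro mult_right_mono_neg) auto
  then show ?thesis using assms by (simp add: flat_curvature_def)
qed

lemma Psi_flat'_mono:
  assumes N: "2 \<le> N" and xy: "0 < x" "x \<le> y" "y < 1"
    and curv: "\<And>u. x \<le> u \<Longrightarrow> u \<le> y \<Longrightarrow> 0 \<le> flat_curvature N c u"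
  shows "Psi_flat' N c x \<le> Psi_flat' N c y"
proof (rule DERIV_nonneg_imp_nondecreasing[OF \<open>x \<le> y\<close>])
  fix u assume u: "x \<le> u" "u \<le> y"
  then have "0 < u" "u < 1" using xy by linarith+
  then have "0 \<le> flat_curvature N c u / (u * (1 - u) * (N - 2 + u))"
    using curv[OF u] N by simp
  then show "\<exists>d. DERIV (Psi_flat' N c) u :> d \<and> 0 \<le> d"
    using has_real_derivative_Psi_flat'[OF N \<open>0 < u\<close> \<open>u < 1\<close>] by blast
qed

lemma Psi_flat'_antimono:
  assumes N: "2 \<le> N" and xy: "0 < x" "x \<le> y" "y < 1"
    and curv: "\<And>u. x \<le> u \<Longrightarrow> u \<le> y \<Longrightarrow> flat_curvature N c u \<le> 0"
  shows "Psi_flat' N c y \<le> Psi_flat' N c x"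
proof (rule DERIV_nonpos_imp_nonincreasing[OF \<open>x \<le> y\<close>])
  fix u assume u: "x \<le> u" "u \<le> y"
  then have "0 < u" "u < 1" using xy by linarith+
  then have "flat_curvature N c u / (u * (1 - u) * (N - 2 + u)) \<le> 0"
    using curv[OF u] N by (simp add: divide_nonpos_pos)
  then show "\<exists>d. DERIV (Psi_flat' N c) u :> d \<and> d \<le> 0"
    using has_real_derivative_Psi_flat'[OF N \<open>0 < u\<close> \<open>u < 1\<close>] by blast
qed

lemma flat_curvature_nonneg:
  assumes N: "2 \<le> N" and c: "1 \<le> c * (N - 1)" and u: "0 \<le> u" "u \<le> 1 / N"
  shows "0 \<le> flat_curvature N c u"
proof (rule flat_curvature_nonneg_between[OF u])
  have "0 \<le> c" using c N by (smt (verit) mult_nonpos_nonneg)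
  then show "0 \<le> flat_curvature N c 0"
    using N by (simp add: flat_curvature_def)
  have "flat_curvature N c (1 / N) = (N - 1) * (c * (N - 1) - 1) / N"
    using N by (simp add: flat_curvature_def field_simps)
  then show "0 \<le> flat_curvature N c (1 / N)"
    using c N by simp
qed

lemma Psi_flat_antimono_left:
  assumes N: "2 \<le> N" and c: "1 \<le> c * (N - 1)" and t: "0 \<le> t" "t \<le> 1 / N"
  shows "Psi_flat N c (1 / N) \<le> Psi_flat N c t"
proof (rule DERIV_nonpos_imp_decreasing_open[OF t(2)])
  have inv: "0 < 1 / N" "1 / N < 1" using N by simp_all
  show "continuous_on {t..1 / N} (Psi_flat N c)"
    by (rule continuous_on_subset[OF continuous_on_Psi_flat[OF N]]) (use t inv in auto)
  fix w assume w: "t < w" "w < 1 / N"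
  have "Psi_flat' N c w \<le> Psi_flat' N c (1 / N)"
    by (rule Psi_flat'_mono[OF N]) (use w t inv in \<open>auto intro: flat_curvature_nonneg[OF N c]\<close>)
  moreover have "w < 1" using w inv by linarith
  then have "(Psi_flat N c has_real_derivative Psi_flat' N c w) (at w)"
    using w t by (intro has_real_derivative_Psi_flat[OF N]) auto
  ultimately show "\<exists>y. DERIV (Psi_flat N c) w :> y \<and> y \<le> 0"
    using Psi_flat_inverse(2)[OF N] by auto
qed

(* Psi_flat' vanishes at 1/N; as flat_curvature is affine and nonnegative at 1/N, once Psi_flat'
   turns negative it stays negative, so Psi_flat increases and then decreases on [1/N, 1]. *)
lemma Psi_flat_ge_min_right:
  assumes N: "2 \<le> N" and c: "1 \<le> c * (N - 1)" and t: "1 / N \<le> t" "t \<le> 1"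
  shows "min (Psi_flat N c (1 / N)) (Psi_flat N c 1) \<le> Psi_flat N c t"
proof (rule min_le_if_deriv_stays_nonpos[where f = "Psi_flat N c" and f' = "Psi_flat' N c"
      and a = "1 / N" and b = 1])
  have inv: "0 < 1 / N" "1 / N < 1" using N by simp_all
  have curv_inv: "0 \<le> flat_curvature N c (1 / N)"
    using flat_curvature_nonneg[OF N c] inv by simp
  show "continuous_on {1 / N..1} (Psi_flat N c)"
    by (rule continuous_on_subset[OF continuous_on_Psi_flat[OF N]]) (use inv in auto)
  show "(Psi_flat N c has_real_derivative Psi_flat' N c x) (at x)" if "1 / N < x" "x < 1" for x
    by (intro has_real_derivative_Psi_flat[OF N]) (use that inv in linarith)+
  fix u v assume uv: "1 / N < u" "u \<le> v" "v < 1" and neg: "Psi_flat' N c u < 0"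
  have "0 < u" using uv(1) inv(1) by linarith
  have "flat_curvature N c u < 0"
  proof (rule ccontr)
    assume "\<not> flat_curvature N c u < 0"
    then have "0 \<le> flat_curvature N c w" if "1 / N \<le> w" "w \<le> u" for w
      using flat_curvature_nonneg_between[OF that curv_inv] by simp
    then have "Psi_flat' N c (1 / N) \<le> Psi_flat' N c u"
      by (intro Psi_flat'_mono[OF N]) (use uv inv in auto)
    with neg show False using Psi_flat_inverse(2)[OF N] by simp
  qed
  then have "flat_curvature N c w \<le> 0" if "u \<le> w" for w
    using flat_curvature_nonneg_between[of "1 / N" u w N c] curv_inv uv that by linarith
  then have "Psi_flat' N c v \<le> Psi_flat' N c u"
    by (intro Psi_flat'_antimono[OF N]) (use uv \<open>0 < u\<close> in auto)
  with neg show "Psi_flat' N c v \<le> 0" by simp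
qed (use t in auto)

lemma Psi_flat_nonneg:
  assumes N: "2 \<le> N" and c: "1 \<le> c * (N - 1)" and "0 \<le> Psi c (1 / N)"
    and t: "0 \<le> t" "t \<le> 1"
  shows "0 \<le> Psi_flat N c t"
proof -
  have "0 \<le> Psi_flat N c (1 / N)"
    using Psi_flat_inverse(1)[OF N] \<open>0 \<le> Psi c (1 / N)\<close> N by simp
  show ?thesis
  proof (cases "t \<le> 1 / N")
    case True
    with \<open>0 \<le> Psi_flat N c (1 / N)\<close> show ?thesis
      using Psi_flat_antimono_left[OF N c t(1) True] by linarith
  next
    case False
    then have "1 / N \<le> t" by simp
    with \<open>0 \<le> Psi_flat N c (1 / N)\<close> show ?thesis
      using Psi_flat_ge_min_right[OF N c _ t(2)] by simp
  qed
qed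

section \<open>The threshold p0\<close>

definition p0 :: "nat \<Rightarrow> real" where
  "p0 n = (real n * ln (real n) - (real n - 1) * ln (real n - 1)) / ln (real n)"

lemma ln_le_diff_div_sqrt:
  fixes x :: real
  assumes "1 \<le> x"
  shows "ln x \<le> (x - 1) / sqrt x"
proof -
  define m where "m = sqrt x"
  have "1 \<le> m" using assms by (simp add: m_def)
  have "1 - 1 / 1 - 2 * ln 1 \<le> m - 1 / m - 2 * ln m"
  proof (rule DERIV_nonneg_imp_nondecreasing[OF \<open>1 \<le> m\<close>])
    fix u :: real assume "1 \<le> u"
    then have "((\<lambda>u. u - 1 / u - 2 * ln u) has_real_derivative (u - 1)\<^sup>2 / u\<^sup>2) (at u)"
      by (auto intro!: derivative_eq_intros simp: field_simps power2_eq_square)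
    then show "\<exists>d. ((\<lambda>u. u - 1 / u - 2 * ln u) has_real_derivative d) (at u) \<and> 0 \<le> d"
      by auto
  qed
  moreover have "ln x = 2 * ln m" and "(x - 1) / sqrt x = m - 1 / m"
    using assms \<open>1 \<le> m\<close> by (simp_all add: m_def ln_sqrt field_simps)
  ultimately show ?thesis by simp
qed

lemma p0_minus_1:
  assumes "2 \<le> n"
  shows "p0 n - 1 = (real n - 1) * (ln (real n) - ln (real n - 1)) / ln (real n)"
  using assms by (simp add: p0_def field_simps)

lemma Psi_p0_inverse:
  assumes "2 \<le> n"
  shows "Psi (p0 n - 1) (1 / real n) = 0"
proof -
  define N where "N = real n"
  define c where "c = p0 n - 1"
  have N: "2 \<le> N" using assms by (simp add: N_def)
  have "1 - 1 / N = (N - 1) / N" using N by (simp add: field_simps)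
  then have "ln (1 - 1 / N) = ln (N - 1) - ln N"
    using N by (simp add: ln_div)
  then have "Psi c (1 / N) = - (c * ln N - (N - 1) * (ln N - ln (N - 1))) / N"
    using N by (simp add: Psi_def ln_div field_simps)
  also have "c * ln N = (N - 1) * (ln N - ln (N - 1))"
    using N by (simp add: c_def p0_minus_1[OF assms] N_def)
  finally show ?thesis by (simp add: c_def N_def)
qed

lemma p0_minus_1_times_ge_1:
  assumes "2 \<le> n"
  shows "1 \<le> (p0 n - 1) * (real n - 1)"
proof (cases "n = 2")
  case True
  then show ?thesis by (simp add: p0_minus_1)
next
  case False
  define N where "N = real n"
  have N: "3 \<le> N" using assms False by (simp add: N_def)
  have "ln (N - 1) - ln N \<le> (N - 1) / N - 1"
    using N ln_le_minus_one[of "(N - 1) / N"] by (simp add: ln_div)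
  then have step: "1 / N \<le> ln N - ln (N - 1)"
    using N by (simp add: field_simps)
  have "3 * N \<le> N * N" using N by (intro mult_right_mono) auto
  then have "sqrt N \<le> sqrt ((N - 1)\<^sup>2)"
    by (intro real_sqrt_le_mono) (simp add: power2_eq_square algebra_simps)
  then have "sqrt N \<le> N - 1" using N by simp
  have "ln N \<le> (N - 1) / sqrt N"
    using N by (intro ln_le_diff_div_sqrt) simp
  also have "\<dots> = (N - 1) * sqrt N / N"
    using N by (simp add: field_simps real_sqrt_divide[symmetric])
  also have "\<dots> \<le> (N - 1) * (N - 1) * (1 / N)"
    using \<open>sqrt N \<le> N - 1\<close> N by (simp add: divide_right_mono mult_left_mono)
  also have "\<dots> \<le> (N - 1) * (N - 1) * (ln N - ln (N - 1))"
    using step N by (intro mult_left_mono) auto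
  finally have "ln N \<le> (N - 1) * (N - 1) * (ln N - ln (N - 1))" .
  then show ?thesis
    using N by (simp add: p0_minus_1[OF assms] N_def[symmetric] field_simps)
qed

lemma sum_Psi_p0_nonneg:
  fixes I :: "'a set" and \<pi> :: "'a \<Rightarrow> real"
  assumes n: "2 \<le> n" and fin: "finite I" and card: "card I \<le> n"
    and nonneg: "\<forall>i\<in>I. 0 \<le> \<pi> i" and sum1: "sum \<pi> I = 1"
  shows "0 \<le> (\<Sum>i\<in>I. Psi (p0 n - 1) (\<pi> i))"
proof -
  define c where "c = p0 n - 1"
  define N where "N = real n"
  define \<tau> where "\<tau> = c / (1 + c)"
  have N: "2 \<le> N" using n by (simp add: N_def)
  have c: "1 \<le> c * (N - 1)" "Psi c (1 / N) = 0"
    using p0_minus_1_times_ge_1[OF n] Psi_p0_inverse[OF n] by (simp_all add: c_def N_def)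
  then have "0 \<le> c" using N by (smt (verit) mult_nonpos_nonneg)
  then have "0 \<le> \<tau>" by (simp add: \<tau>_def)
  have "I \<noteq> {}" using sum1 by auto
  obtain \<pi>' i0 where \<pi>': "\<forall>i\<in>I. 0 \<le> \<pi>' i" "sum \<pi>' I = 1"
      "(\<Sum>i\<in>I. Psi c (\<pi>' i)) \<le> (\<Sum>i\<in>I. Psi c (\<pi> i))"
    and i0: "i0 \<in> I" "\<forall>j\<in>I - {i0}. \<pi>' j \<le> \<tau>"
    using sum_concave_reduce_to_one_above[OF concave_on_Psi[OF \<open>0 \<le> c\<close>] _ fin \<open>I \<noteq> {}\<close>
        nonneg sum1] \<open>0 \<le> \<tau>\<close>
    by (auto simp: \<tau>_def)
  define t where "t = \<pi>' i0"
  define J where "J = I - {i0}"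
  have t: "0 \<le> t" "t \<le> 1"
    using \<pi>' i0 fin member_le_sum[of i0 I \<pi>'] by (auto simp: t_def)
  have "card J \<le> n - 1" using card i0 fin by (simp add: J_def)
  have sum_J: "sum \<pi>' J = 1 - t" using \<pi>'(2) i0 fin by (simp add: J_def t_def sum_diff1)
  have "real (n - 1) * Psi c (sum \<pi>' J / real (n - 1)) \<le> (\<Sum>j\<in>J. Psi c (\<pi>' j))"
    using n fin \<open>card J \<le> n - 1\<close> \<pi>'(1) i0(2)
    by (intro convex_on_mean_padded_le_sum[OF convex_on_Psi[OF \<open>0 \<le> c\<close>]])
      (auto simp: J_def \<tau>_def)
  then have "(N - 1) * Psi c ((1 - t) / (N - 1)) \<le> (\<Sum>j\<in>J. Psi c (\<pi>' j))"
    using n by (simp add: sum_J N_def of_nat_diff)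
  moreover have "(\<Sum>i\<in>I. Psi c (\<pi>' i)) = Psi c t + (\<Sum>j\<in>J. Psi c (\<pi>' j))"
    using fin i0 by (simp add: J_def t_def sum.remove)
  moreover have "0 \<le> Psi_flat N c t"
    using Psi_flat_nonneg[OF N c(1) _ t] c(2) by simp
  ultimately show ?thesis
    using \<pi>'(3) by (simp add: Psi_flat_def c_def)
qed

lemma Psi_antimono:
  assumes "c \<le> c'" "0 \<le> t" "t \<le> 1"
  shows "Psi c' t \<le> Psi c t"
proof -
  have "t * ln t \<le> 0"
    using assms by (cases "t = 0") (auto simp: mult_nonneg_nonpos)
  then have "c' * (t * ln t) \<le> c * (t * ln t)"
    using assms by (intro mult_right_mono_neg)
  then show ?thesis by (simp add: Psi_def)
qed

lemma sum_Psi_nonneg: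
  fixes I :: "'a set" and \<pi> :: "'a \<Rightarrow> real"
  assumes "2 \<le> n" and fin: "finite I" and "card I \<le> n"
    and nonneg: "\<forall>i\<in>I. 0 \<le> \<pi> i" and sum1: "sum \<pi> I = 1" and "c \<le> p0 n - 1"
  shows "0 \<le> (\<Sum>i\<in>I. Psi c (\<pi> i))"
proof -
  have "(\<Sum>i\<in>I. Psi (p0 n - 1) (\<pi> i)) \<le> (\<Sum>i\<in>I. Psi c (\<pi> i))"
    using assms member_le_sum[of _ I \<pi>] by (intro sum_mono Psi_antimono) auto
  then show ?thesis using sum_Psi_p0_nonneg[OF assms(1-5)] by linarith
qed

section \<open>An entropy inequality\<close>

lemma ln_sum_eq_weighted_ln_minus_entropy:
  fixes w :: "'a \<Rightarrow> real"
  assumes fin: "finite I" and nonneg: "\<forall>i\<in>I. 0 \<le> w i" and pos: "0 < sum w I"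
  defines "\<pi> \<equiv> \<lambda>i. w i / sum w I"
  shows "ln (sum w I) = (\<Sum>i\<in>I. \<pi> i * ln (w i)) - (\<Sum>i\<in>I. \<pi> i * ln (\<pi> i))"
proof -
  have "(\<Sum>i\<in>I. \<pi> i * ln (w i)) - (\<Sum>i\<in>I. \<pi> i * ln (\<pi> i)) = (\<Sum>i\<in>I. \<pi> i * ln (sum w I))"
    unfolding sum_subtractf[symmetric]
  proof (rule sum.cong[OF refl])
    fix i assume "i \<in> I"
    show "\<pi> i * ln (w i) - \<pi> i * ln (\<pi> i) = \<pi> i * ln (sum w I)"
    proof (cases "w i = 0")
      case False
      then have "0 < w i" using nonneg \<open>i \<in> I\<close> by (simp add: less_le)
      then show ?thesis using pos by (simp add: \<pi>_def ln_div algebra_simps)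
    qed (simp add: \<pi>_def)
  qed
  also have "\<dots> = ln (sum w I)"
    using pos by (simp add: \<pi>_def sum_distrib_right[symmetric] sum_divide_distrib[symmetric])
  finally show ?thesis ..
qed

lemma mult_ln_diff_le:
  fixes q y :: real
  assumes "0 \<le> q" "0 \<le> y" "0 < q \<Longrightarrow> 0 < y"
  shows "q * ln y - q * ln q \<le> y - q"
proof (cases "q = 0")
  case False
  then have "0 < q" "0 < y" using assms by auto
  then have "q * ln y - q * ln q = q * ln (y / q)" by (simp add: ln_div algebra_simps)
  also have "\<dots> \<le> q * (y / q - 1)"
    using \<open>0 < q\<close> \<open>0 < y\<close> by (intro mult_left_mono ln_le_minus_one) auto
  also have "\<dots> = y - q" using \<open>0 < q\<close> by (simp add: field_simps)
  finally show ?thesis .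
qed (use assms in simp)

lemma binary_cross_entropy_ge_entropy:
  fixes q y :: real
  assumes "0 \<le> q" "q \<le> 1" "0 \<le> y" "y \<le> 1" "0 < q \<Longrightarrow> 0 < y" "q < 1 \<Longrightarrow> y < 1"
  shows "q * ln y + (1 - q) * ln (1 - y) \<le> q * ln q + (1 - q) * ln (1 - q)"
  using mult_ln_diff_le[of q y] mult_ln_diff_le[of "1 - q" "1 - y"] assms by simp

lemma sum_weighted_ln_exactly_one:
  fixes \<pi> y :: "'a \<Rightarrow> real"
  assumes fin: "finite I" and sum1: "sum \<pi> I = 1"
    and pos: "\<And>i. i \<in> I \<Longrightarrow> \<pi> i \<noteq> 0 \<Longrightarrow> 0 < y i \<and> (\<forall>k\<in>I - {i}. y k < 1)"
  shows "(\<Sum>i\<in>I. \<pi> i * ln (y i * (\<Prod>k\<in>I - {i}. 1 - y k)))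
    = (\<Sum>k\<in>I. \<pi> k * ln (y k) + (1 - \<pi> k) * ln (1 - y k))"
proof -
  have "(\<Sum>i\<in>I. \<pi> i * ln (y i * (\<Prod>k\<in>I - {i}. 1 - y k)))
      = (\<Sum>i\<in>I. \<pi> i * ln (y i) + (\<Sum>k\<in>{k\<in>I. i \<noteq> k}. \<pi> i * ln (1 - y k)))"
  proof (rule sum.cong[OF refl])
    fix i assume i: "i \<in> I"
    have I_i: "I - {i} = {k\<in>I. i \<noteq> k}" by auto
    show "\<pi> i * ln (y i * (\<Prod>k\<in>I - {i}. 1 - y k))
        = \<pi> i * ln (y i) + (\<Sum>k\<in>{k\<in>I. i \<noteq> k}. \<pi> i * ln (1 - y k))"
    proof (cases "\<pi> i = 0")
      case False
      with pos[OF i] have "0 < y i" and below_1: "\<forall>k\<in>I - {i}. y k < 1" by auto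
      have factors: "0 < 1 - y k" if "k \<in> I - {i}" for k
        using below_1 that by simp
      then have "1 - y k \<noteq> 0" if "k \<in> I - {i}" for k
        using that by fastforce
      then have "ln (\<Prod>k\<in>I - {i}. 1 - y k) = (\<Sum>k\<in>I - {i}. ln (1 - y k))"
        by (rule ln_prod[of "I - {i}" "\<lambda>k. 1 - y k", OF finite_Diff[OF fin]])
      moreover have "0 < (\<Prod>k\<in>I - {i}. 1 - y k)" using factors by (rule prod_pos)
      ultimately have "ln (y i * (\<Prod>k\<in>I - {i}. 1 - y k)) = ln (y i) + (\<Sum>k\<in>I - {i}. ln (1 - y k))"
        using \<open>0 < y i\<close> by (simp add: ln_mult)
      then show ?thesis by (simp add: I_i algebra_simps sum_distrib_left)
    qed simp
  qed
  also have "\<dots> = (\<Sum>i\<in>I. \<pi> i * ln (y i)) + (\<Sum>i\<in>I. \<Sum>k\<in>{k\<in>I. i \<noteq> k}. \<pi> i * ln (1 - y k))"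
    by (simp add: sum.distrib)
  also have "(\<Sum>i\<in>I. \<Sum>k\<in>{k\<in>I. i \<noteq> k}. \<pi> i * ln (1 - y k))
      = (\<Sum>k\<in>I. \<Sum>i\<in>{i\<in>I. i \<noteq> k}. \<pi> i * ln (1 - y k))"
    by (rule sum.swap_restrict[OF fin fin])
  also have "(\<Sum>k\<in>I. \<Sum>i\<in>{i\<in>I. i \<noteq> k}. \<pi> i * ln (1 - y k)) = (\<Sum>k\<in>I. (1 - \<pi> k) * ln (1 - y k))"
  proof (rule sum.cong[OF refl])
    fix k assume "k \<in> I"
    moreover have "{i\<in>I. i \<noteq> k} = I - {k}" by auto
    ultimately have "(\<Sum>i\<in>{i\<in>I. i \<noteq> k}. \<pi> i) = 1 - \<pi> k"
      using sum1 fin by (simp add: sum_diff1)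
    then show "(\<Sum>i\<in>{i\<in>I. i \<noteq> k}. \<pi> i * ln (1 - y k)) = (1 - \<pi> k) * ln (1 - y k)"
      by (simp add: sum_distrib_right[symmetric])
  qed
  finally show ?thesis by (simp add: sum.distrib)
qed

lemma sum_binary_cross_entropy_le:
  fixes \<pi> y :: "'a \<Rightarrow> real"
  assumes fin: "finite I" and nonneg: "\<forall>i\<in>I. 0 \<le> \<pi> i" and sum1: "sum \<pi> I = 1"
    and y: "\<forall>i\<in>I. 0 \<le> y i \<and> y i \<le> 1"
    and supp: "\<And>i. i \<in> I \<Longrightarrow> \<pi> i \<noteq> 0 \<Longrightarrow> 0 < y i \<and> (\<forall>k\<in>I - {i}. y k < 1)"
  shows "(\<Sum>k\<in>I. \<pi> k * ln (y k) + (1 - \<pi> k) * ln (1 - y k))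
    \<le> (\<Sum>k\<in>I. \<pi> k * ln (\<pi> k) + (1 - \<pi> k) * ln (1 - \<pi> k))"
proof (rule sum_mono, rule binary_cross_entropy_ge_entropy)
  fix k assume k: "k \<in> I"
  show "0 \<le> \<pi> k" "\<pi> k \<le> 1" "0 \<le> y k" "y k \<le> 1"
    using nonneg y k member_le_sum[of k I \<pi>] fin sum1 by auto
  show "0 < y k" if "0 < \<pi> k" using supp[OF k] that by simp
  show "y k < 1" if "\<pi> k < 1"
  proof -
    have "sum \<pi> (I - {k}) \<noteq> 0" using sum1 k fin that by (simp add: sum_diff1)
    then obtain i where "i \<in> I - {k}" "\<pi> i \<noteq> 0" by (meson sum.neutral)
    then show ?thesis using supp[of i] k by auto
  qed
qed

lemma sum_exactly_one_powr_le_1: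
  fixes y :: "'a \<Rightarrow> real"
  assumes n: "2 \<le> n" and fin: "finite I" and card: "card I \<le> n"
    and y: "\<forall>i\<in>I. 0 \<le> y i \<and> y i \<le> 1" and p: "1 \<le> p" "p \<le> p0 n"
  shows "(\<Sum>i\<in>I. (y i * (\<Prod>k\<in>I - {i}. 1 - y k)) powr (1 / p)) \<le> 1"
proof -
  define a where "a i = y i * (\<Prod>k\<in>I - {i}. 1 - y k)" for i
  define S where "S = (\<Sum>i\<in>I. a i powr (1 / p))"
  define \<pi> where "\<pi> i = a i powr (1 / p) / S" for i
  show ?thesis
  proof (cases "S = 0")
    case True
    then show ?thesis by (simp add: S_def a_def)
  next
    case False
    then have "0 < S" by (simp add: S_def less_le sum_nonneg)
    have \<pi>_nonneg: "\<forall>i\<in>I. 0 \<le> \<pi> i" and \<pi>_sum: "sum \<pi> I = 1"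
      using \<open>0 < S\<close> by (simp_all add: \<pi>_def S_def sum_divide_distrib[symmetric])
    have supp: "0 < y i \<and> (\<forall>k\<in>I - {i}. y k < 1)" if "i \<in> I" "\<pi> i \<noteq> 0" for i
    proof -
      have "y i \<noteq> 0 \<and> (\<Prod>k\<in>I - {i}. 1 - y k) \<noteq> 0" using that by (auto simp: \<pi>_def a_def)
      then show ?thesis using y that fin by (auto simp: less_le)
    qed
    have cross: "(\<Sum>i\<in>I. \<pi> i * ln (a i))
        = (\<Sum>k\<in>I. \<pi> k * ln (y k) + (1 - \<pi> k) * ln (1 - y k))"
      unfolding a_def by (rule sum_weighted_ln_exactly_one[OF fin \<pi>_sum supp])
    have gibbs: "(\<Sum>k\<in>I. \<pi> k * ln (y k) + (1 - \<pi> k) * ln (1 - y k))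
        \<le> (\<Sum>k\<in>I. \<pi> k * ln (\<pi> k) + (1 - \<pi> k) * ln (1 - \<pi> k))"
      by (rule sum_binary_cross_entropy_le[OF fin \<pi>_nonneg \<pi>_sum y supp])
    have "ln S = (\<Sum>i\<in>I. \<pi> i * ln (a i)) / p - (\<Sum>i\<in>I. \<pi> i * ln (\<pi> i))"
      using ln_sum_eq_weighted_ln_minus_entropy[of I "\<lambda>i. a i powr (1 / p)"] fin \<open>0 < S\<close>
      by (simp add: S_def[symmetric] \<pi>_def[symmetric] sum_divide_distrib)
    also have "\<dots> \<le> (\<Sum>k\<in>I. \<pi> k * ln (\<pi> k) + (1 - \<pi> k) * ln (1 - \<pi> k)) / p
        - (\<Sum>k\<in>I. \<pi> k * ln (\<pi> k))"
      using gibbs p by (simp add: cross divide_right_mono)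
    also have "\<dots> = (\<Sum>k\<in>I. - Psi (p - 1) (\<pi> k) / p)"
      unfolding sum_divide_distrib sum_subtractf[symmetric]
      using p by (intro sum.cong) (simp_all add: Psi_def field_simps)
    also have "\<dots> \<le> 0"
      using sum_Psi_nonneg[OF n fin card \<pi>_nonneg \<pi>_sum, of "p - 1"] p
      by (simp add: sum_negf sum_divide_distrib[symmetric])
    finally show ?thesis using \<open>0 < S\<close> by (simp add: S_def a_def)
  qed
qed

lemma sum_powr_prod_complement_le:
  fixes x T :: "'a \<Rightarrow> real"
  assumes n: "2 \<le> n" and fin: "finite I" and card: "card I \<le> n"
    and xT: "\<forall>k\<in>I. 0 \<le> x k \<and> x k \<le> T k" and p: "1 \<le> p" "p \<le> p0 n"
  shows "(\<Sum>i\<in>I. x i powr (1 / p) * (\<Prod>k\<in>I - {i}. (T k - x k) powr (1 / p)))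
    \<le> (\<Prod>k\<in>I. T k powr (1 / p))"
proof -
  define y where "y k = x k / T k" for k
  have y: "\<forall>k\<in>I. 0 \<le> y k \<and> y k \<le> 1"
    using xT by (auto simp: y_def divide_le_eq_1)
  have x_eq: "x k = T k * y k" and diff_eq: "T k - x k = T k * (1 - y k)" if "k \<in> I" for k
    using xT that by (auto simp: y_def algebra_simps)
  have "x i powr (1 / p) * (\<Prod>k\<in>I - {i}. (T k - x k) powr (1 / p))
      = (\<Prod>k\<in>I. T k powr (1 / p)) * (y i * (\<Prod>k\<in>I - {i}. 1 - y k)) powr (1 / p)" if "i \<in> I" for i
  proof -
    have "(\<Prod>k\<in>I - {i}. (T k - x k) powr (1 / p))
        = (\<Prod>k\<in>I - {i}. T k powr (1 / p) * (1 - y k) powr (1 / p))"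
      using diff_eq by (intro prod.cong) (auto simp: powr_mult)
    also have "\<dots> = (\<Prod>k\<in>I - {i}. T k powr (1 / p)) * (\<Prod>k\<in>I - {i}. (1 - y k) powr (1 / p))"
      by (rule prod.distrib)
    finally have "x i powr (1 / p) * (\<Prod>k\<in>I - {i}. (T k - x k) powr (1 / p))
        = (T i powr (1 / p) * (\<Prod>k\<in>I - {i}. T k powr (1 / p)))
          * (y i powr (1 / p) * (\<Prod>k\<in>I - {i}. (1 - y k) powr (1 / p)))"
      using x_eq[OF that] by (simp only: powr_mult ac_simps)
    also have "T i powr (1 / p) * (\<Prod>k\<in>I - {i}. T k powr (1 / p)) = (\<Prod>k\<in>I. T k powr (1 / p))"
      using fin that by (simp add: prod.remove)
    also have "y i powr (1 / p) * (\<Prod>k\<in>I - {i}. (1 - y k) powr (1 / p))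
        = (y i * (\<Prod>k\<in>I - {i}. 1 - y k)) powr (1 / p)"
      by (simp only: powr_mult prod_powr_distrib)
    finally show ?thesis .
  qed
  then have "(\<Sum>i\<in>I. x i powr (1 / p) * (\<Prod>k\<in>I - {i}. (T k - x k) powr (1 / p)))
      = (\<Prod>k\<in>I. T k powr (1 / p)) * (\<Sum>i\<in>I. (y i * (\<Prod>k\<in>I - {i}. 1 - y k)) powr (1 / p))"
    by (simp add: sum_distrib_left)
  also have "\<dots> \<le> (\<Prod>k\<in>I. T k powr (1 / p))"
    using sum_exactly_one_powr_le_1[OF n fin card y p]
    by (intro mult_right_le_one_le prod_nonneg) (auto intro: sum_nonneg)
  finally show ?thesis .
qed

section \<open>Sums over bijections and the permanent\<close>

(* Bijections are made extensional so that each one is counted once in a sum over bijs R C. *)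
definition bijs :: "'a set \<Rightarrow> 'b set \<Rightarrow> ('a \<Rightarrow> 'b) set" where
  "bijs R C = {f \<in> extensional R. bij_betw f R C}"

lemma finite_bijs:
  assumes "finite R" "finite C"
  shows "finite (bijs R C)"
proof (rule finite_subset)
  show "bijs R C \<subseteq> PiE R (\<lambda>_. C)" by (auto simp: bijs_def PiE_iff bij_betw_def extensional_def)
  show "finite (PiE R (\<lambda>_. C))" using assms by (rule finite_PiE)
qed

lemma bij_betw_fun_upd_insert:
  assumes "i \<notin> A" "c \<notin> B" "bij_betw g A B"
  shows "bij_betw (g(i := c)) (insert i A) (insert c B)"
proof -
  have "bij_betw (g(i := c)) A B"
    using assms by (subst bij_betw_cong[of A _ g]) auto
  then show ?thesis
    using notIn_Un_bij_betw[of i A "g(i := c)" B] assms by simp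
qed

lemma bij_betw_bijs_fun_upd:
  assumes c: "c \<in> C"
  shows "bij_betw (\<lambda>(i, h). h(i := c)) (SIGMA i:R. bijs (R - {i}) (C - {c})) (bijs R C)"
proof (rule bij_betw_byWitness[where f' = "\<lambda>f. (inv_into R f c, f(inv_into R f c := undefined))"])
  have bij: "bij_betw (h(i := c)) R C" and inv: "inv_into R (h(i := c)) c = i"
    if "(i, h) \<in> (SIGMA i:R. bijs (R - {i}) (C - {c}))" for i h
  proof -
    have i: "i \<in> R" and h: "bij_betw h (R - {i}) (C - {c})"
      using that by (auto simp: bijs_def)
    have "bij_betw (h(i := c)) (insert i (R - {i})) (insert c (C - {c}))"
      by (rule bij_betw_fun_upd_insert[OF _ _ h]) auto
    then show bij: "bij_betw (h(i := c)) R C"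
      using i c by (simp add: insert_absorb)
    then show "inv_into R (h(i := c)) c = i"
      using i by (metis bij_betw_imp_inj_on fun_upd_same inv_into_f_f)
  qed
  show "\<forall>a\<in>(SIGMA i:R. bijs (R - {i}) (C - {c})).
      (\<lambda>f. (inv_into R f c, f(inv_into R f c := undefined))) ((\<lambda>(i, h). h(i := c)) a) = a"
    using inv by (auto simp: bijs_def extensional_def fun_upd_idem)
  show "(\<lambda>(i, h). h(i := c)) ` (SIGMA i:R. bijs (R - {i}) (C - {c})) \<subseteq> bijs R C"
    using bij by (auto simp: bijs_def extensional_def)
  have i: "inv_into R f c \<in> R" "f (inv_into R f c) = c" if "f \<in> bijs R C" for f
    using that c by (auto simp: bijs_def bij_betw_def inv_into_into f_inv_into_f)
  show "\<forall>f\<in>bijs R C. (\<lambda>(i, h). h(i := c)) (inv_into R f c, f(inv_into R f c := undefined)) = f"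
    using i by (simp add: fun_upd_idem)
  show "(\<lambda>f. (inv_into R f c, f(inv_into R f c := undefined))) ` bijs R C
      \<subseteq> (SIGMA i:R. bijs (R - {i}) (C - {c}))"
  proof (rule image_subsetI)
    fix f assume f: "f \<in> bijs R C"
    define i where "i = inv_into R f c"
    have bij: "bij_betw f R C" and ext: "f \<in> extensional R"
      using f by (auto simp: bijs_def)
    have "bij_betw f {i} {c}" using i[OF f] by (simp add: i_def bij_betw_def)
    then have "bij_betw f (R - {i}) (C - {c})"
      by (rule bij_betw_DiffI[OF bij]) (use i[OF f] c in \<open>auto simp: i_def\<close>)
    then have "bij_betw (f(i := undefined)) (R - {i}) (C - {c})"
      by (subst bij_betw_cong[of _ _ f]) auto
    then show "(inv_into R f c, f(inv_into R f c := undefined))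
        \<in> (SIGMA i:R. bijs (R - {i}) (C - {c}))"
      using i[OF f] ext by (auto simp: i_def[symmetric] bijs_def extensional_def)
  qed
qed

lemma sum_bijs_expand_column:
  fixes g :: "'a \<Rightarrow> 'b \<Rightarrow> real"
  assumes finR: "finite R" and finC: "finite C" and c: "c \<in> C"
  shows "(\<Sum>f\<in>bijs R C. \<Prod>i\<in>R. g i (f i))
    = (\<Sum>i\<in>R. g i c * (\<Sum>h\<in>bijs (R - {i}) (C - {c}). \<Prod>k\<in>R - {i}. g k (h k)))"
proof -
  have "(\<Sum>f\<in>bijs R C. \<Prod>i\<in>R. g i (f i))
      = (\<Sum>(i, h)\<in>(SIGMA i:R. bijs (R - {i}) (C - {c})). \<Prod>k\<in>R. g k ((h(i := c)) k))"
    using sum.reindex_bij_betw[OF bij_betw_bijs_fun_upd[OF c], of "\<lambda>f. \<Prod>i\<in>R. g i (f i)"]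
    by (simp add: case_prod_unfold)
  also have "\<dots> = (\<Sum>i\<in>R. \<Sum>h\<in>bijs (R - {i}) (C - {c}). \<Prod>k\<in>R. g k ((h(i := c)) k))"
    using finR finC by (intro sum.Sigma[symmetric]) (auto intro: finite_bijs)
  also have "\<dots> = (\<Sum>i\<in>R. g i c * (\<Sum>h\<in>bijs (R - {i}) (C - {c}). \<Prod>k\<in>R - {i}. g k (h k)))"
  proof (rule sum.cong[OF refl])
    fix i assume "i \<in> R"
    have "(\<Prod>k\<in>R. g k ((h(i := c)) k)) = g i c * (\<Prod>k\<in>R - {i}. g k ((h(i := c)) k))" for h
      using finR \<open>i \<in> R\<close> by (simp add: prod.remove)
    moreover have "(\<Prod>k\<in>R - {i}. g k ((h(i := c)) k)) = (\<Prod>k\<in>R - {i}. g k (h k))" for h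
      by (intro prod.cong) auto
    ultimately have "(\<Prod>k\<in>R. g k ((h(i := c)) k)) = g i c * (\<Prod>k\<in>R - {i}. g k (h k))" for h
      by simp
    then show "(\<Sum>h\<in>bijs (R - {i}) (C - {c}). \<Prod>k\<in>R. g k ((h(i := c)) k))
        = g i c * (\<Sum>h\<in>bijs (R - {i}) (C - {c}). \<Prod>k\<in>R - {i}. g k (h k))"
      by (simp add: sum_distrib_left)
  qed
  finally show ?thesis .
qed

lemma sum_bijs_prod_powr_le:
  fixes x :: "'a \<Rightarrow> 'b \<Rightarrow> real"
  assumes n: "2 \<le> n" and p: "1 \<le> p" "p \<le> p0 n"
  shows "finite C \<Longrightarrow> finite R \<Longrightarrow> card R \<le> n \<Longrightarrow> \<forall>i\<in>R. \<forall>j\<in>C. 0 \<le> x i j \<Longrightarrow>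
    (\<Sum>f\<in>bijs R C. \<Prod>i\<in>R. x i (f i) powr (1 / p)) \<le> (\<Prod>i\<in>R. (\<Sum>j\<in>C. x i j) powr (1 / p))"
proof (induction "card C" arbitrary: C R)
  case 0
  then have "C = {}" by simp
  show ?case
  proof (cases "R = {}")
    case True
    then have "bijs R C = {\<lambda>_. undefined}"
      using \<open>C = {}\<close> by (auto simp: bijs_def extensional_def bij_betw_def)
    then show ?thesis using True by simp
  next
    case False
    then have "bijs R C = {}" using \<open>C = {}\<close> by (auto simp: bijs_def bij_betw_def)
    then show ?thesis by (simp add: prod_nonneg)
  qed
next
  case (Suc m)
  then obtain c where c: "c \<in> C" by fastforce
  define T where "T k = (\<Sum>j\<in>C. x k j)" for k
  have "(\<Sum>f\<in>bijs R C. \<Prod>i\<in>R. x i (f i) powr (1 / p))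
      = (\<Sum>i\<in>R. x i c powr (1 / p) *
          (\<Sum>h\<in>bijs (R - {i}) (C - {c}). \<Prod>k\<in>R - {i}. x k (h k) powr (1 / p)))"
    by (rule sum_bijs_expand_column[OF Suc.prems(2,1) c])
  also have "\<dots> \<le> (\<Sum>i\<in>R. x i c powr (1 / p) * (\<Prod>k\<in>R - {i}. (T k - x k c) powr (1 / p)))"
  proof (intro sum_mono mult_left_mono)
    fix i assume "i \<in> R"
    have "(\<Sum>h\<in>bijs (R - {i}) (C - {c}). \<Prod>k\<in>R - {i}. x k (h k) powr (1 / p))
        \<le> (\<Prod>k\<in>R - {i}. (\<Sum>j\<in>C - {c}. x k j) powr (1 / p))"
      using Suc.hyps(2) Suc.prems c \<open>i \<in> R\<close>
      by (intro Suc.hyps(1)) (auto simp: card_Diff_singleton)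
    also have "\<dots> = (\<Prod>k\<in>R - {i}. (T k - x k c) powr (1 / p))"
      using Suc.prems(1) c by (simp add: T_def sum_diff1)
    finally show "(\<Sum>h\<in>bijs (R - {i}) (C - {c}). \<Prod>k\<in>R - {i}. x k (h k) powr (1 / p))
        \<le> (\<Prod>k\<in>R - {i}. (T k - x k c) powr (1 / p))" .
  qed simp
  also have "\<dots> \<le> (\<Prod>k\<in>R. T k powr (1 / p))"
    using Suc.prems c member_le_sum[of c C "x _"]
    by (intro sum_powr_prod_complement_le[OF n _ _ _ p]) (auto simp: T_def)
  finally show ?case by (simp add: T_def)
qed

lemma sum_permutes_eq_sum_bijs:
  fixes h :: "'a \<Rightarrow> 'a \<Rightarrow> real"
  shows "(\<Sum>\<sigma> | \<sigma> permutes S. \<Prod>i\<in>S. h i (\<sigma> i)) = (\<Sum>f\<in>bijs S S. \<Prod>i\<in>S. h i (f i))"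
proof (rule sum.reindex_bij_witness[where j = "\<lambda>\<sigma>. restrict \<sigma> S"
      and i = "\<lambda>f i. if i \<in> S then f i else i"])
  fix \<sigma> assume "\<sigma> \<in> {\<sigma>. \<sigma> permutes S}"
  then have \<sigma>: "\<sigma> permutes S" by simp
  show "(\<lambda>i. if i \<in> S then restrict \<sigma> S i else i) = \<sigma>"
    using \<sigma> by (auto simp: fun_eq_iff permutes_not_in)
  have "bij_betw (restrict \<sigma> S) S S"
    using permutes_imp_bij[OF \<sigma>] by (subst bij_betw_cong[of _ _ \<sigma>]) auto
  then show "restrict \<sigma> S \<in> bijs S S" by (simp add: bijs_def)
  show "(\<Prod>i\<in>S. h i (restrict \<sigma> S i)) = (\<Prod>i\<in>S. h i (\<sigma> i))" by simp
next
  fix f assume "f \<in> bijs S S"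
  then have bij: "bij_betw f S S" and ext: "f \<in> extensional S" by (auto simp: bijs_def)
  show "restrict (\<lambda>i. if i \<in> S then f i else i) S = f"
    using ext by (auto simp: fun_eq_iff extensional_def)
  have "bij_betw (\<lambda>i. if i \<in> S then f i else i) S S"
    using bij by (subst bij_betw_cong[of _ _ f]) auto
  then show "(\<lambda>i. if i \<in> S then f i else i) \<in> {\<sigma>. \<sigma> permutes S}"
    by (auto intro: bij_imp_permutes)
qed

lemma per_le_1:
  assumes n: "2 \<le> n" and p: "1 \<le> p" "p \<le> p0 n"
    and rows: "\<forall>i<n. row_lp_norm n p A i = 1"
  shows "per n A \<le> 1"
proof -
  define x where "x i j = \<bar>A i j\<bar> powr p" for i j
  have abs_eq: "\<bar>a\<bar> = (\<bar>a\<bar> powr p) powr (1 / p)" for a :: real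
    using p by (simp add: powr_powr)
  have "per n A \<le> (\<Sum>\<sigma> | \<sigma> permutes {..<n}. \<Prod>i<n. \<bar>A i (\<sigma> i)\<bar>)"
    unfolding per_def by (intro sum_mono) (simp add: abs_prod[symmetric])
  also have "\<dots> = (\<Sum>f\<in>bijs {..<n} {..<n}. \<Prod>i<n. x i (f i) powr (1 / p))"
    unfolding x_def abs_eq[symmetric] by (rule sum_permutes_eq_sum_bijs)
  also have "\<dots> \<le> (\<Prod>i<n. (\<Sum>j<n. x i j) powr (1 / p))"
    by (rule sum_bijs_prod_powr_le[OF n p]) (auto simp: x_def)
  also have "\<dots> = 1"
    using rows by (simp add: row_lp_norm_def x_def)
  finally show ?thesis .
qed

lemma per_id: "per n (\<lambda>i j. if i = j then 1 else 0) = 1"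
proof -
  have "(\<Prod>i<n. if i = \<sigma> i then 1 else 0 :: real) = (if \<sigma> = id then 1 else 0)"
    if "\<sigma> permutes {..<n}" for \<sigma>
  proof (cases "\<sigma> = id")
    case False
    then obtain k where "\<sigma> k \<noteq> k" by (auto simp: fun_eq_iff)
    moreover from this have "k < n" using that by (meson lessThan_iff permutes_not_in)
    ultimately show ?thesis by (auto intro!: bexI[of _ k])
  qed simp
  then have "per n (\<lambda>i j. if i = j then 1 else 0)
      = (\<Sum>\<sigma> | \<sigma> permutes {..<n}. if \<sigma> = id then 1 else 0)"
    unfolding per_def by (intro sum.cong) auto
  also have "\<dots> = 1"
    using finite_permutations[of "{..<n}"] permutes_id[of "{..<n}"] by (simp add: sum.delta)
  finally show ?thesis .
qed

lemma row_lp_norm_id: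
  assumes "i < n"
  shows "row_lp_norm n p (\<lambda>i j. if i = j then 1 else 0) i = 1"
proof -
  have "(\<Sum>j<n. \<bar>if i = j then 1 else 0 :: real\<bar> powr p) = (\<Sum>j<n. if j = i then 1 else 0)"
    by (intro sum.cong) auto
  then show ?thesis using assms by (simp add: row_lp_norm_def)
qed

theorem theorem1p3:
  fixes n :: nat and p :: real
  assumes "n \<ge> 2"
    and "1 \<le> p"
    and "p \<le> (real n * ln (real n) - (real n - 1) * ln (real n - 1)) / ln (real n)"
  shows "U n p = 1"
proof -
  have "p \<le> p0 n" using assms(3) by (simp add: p0_def)
  show ?thesis
    unfolding U_def
  proof (rule cSup_eq_maximum)
    show "1 \<in> {per n A |A. \<forall>i<n. row_lp_norm n p A i = 1}"
      using per_id row_lp_norm_id by (intro CollectI exI[of _ "\<lambda>i j. if i = j then 1 else 0"]) auto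
    show "x \<le> 1" if "x \<in> {per n A |A. \<forall>i<n. row_lp_norm n p A i = 1}" for x
      using that per_le_1[OF assms(1,2) \<open>p \<le> p0 n\<close>] by blast
  qed
qed

end
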